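(* Let $N,n_{\mathrm{el}}\ge1$, masses $m_1,\dots,m_N>0$ and $M=\mathrm{diag}(m_1I_3,\dots,m_NI_3)\in\mathbb{R}^{3N\times3N}$. Let $V_{\mathrm{ext}}:\mathbb{R}^{3N}\to\mathbb{R}$ be continuously differentiable. For $i=1,\dots,n_{\mathrm{el}}$ let $k_i>0$, $l_{0,i}>0$ and constants $a_{ij}\in\mathbb{R}$ ($j=1,\dots,N$). Writing $q=(q_1,\dots,q_N)$, $v=(v_1,\dots,v_N)$ with $q_j,v_j\in\mathbb{R}^3$, define $\tilde C_i(q)=\frac{\bar q_i\cdot\bar q_i}{l_{0,i}^2}$ with $\bar q_i=\sum_{j=1}^Na_{ij}q_j$, and $V_{\mathrm{int}}(C)=\sum_{i=1}^{n_{\mathrm{el}}}\frac{k_il_{0,i}}{4}(C_i-\ln C_i-1)$ for $C\in(0,\infty)^{n_{\mathrm{el}}}$. Let $(q,v,C)$ be a $C^1$ solution on $[t_0,t_{\mathrm{end}}]$ (with $C(t)\in(0,\infty)^{n_{\mathrm{el}}}$) of $$\dot q=v,\qquad M\dot v=-\nabla V_{\mathrm{ext}}(q)-D\tilde C(q)^{\mathrm T}\nabla V_{\mathrm{int}}(C),\qquad \dot C=D\tilde C(q)\,v,$$ where $D\tilde C(q)$ is the Jacobian of $\tilde C$. Let $L=\sum_{k=1}^N q_k\times m_kv_k$ be the total angular momentum. Then $\frac{d}{dt}L=-\sum_{k=1}^N q_k\times\nabla_{q_k}V_{\mathrm{ext}}(q)$. Consequently, if there is a constant vector $b\in\mathbb{R}^3$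 with $-\nabla_{q_k}V_{\mathrm{ext}}(q)=b$ for all $k$ and all $q$, then $\frac{d}{dt}(L\cdot b)=0$.
   Context: $\nabla_{q_k}V_{\mathrm{ext}}(q)\in\mathbb{R}^3$ denotes the $k$-th three-dimensional block of the gradient $\nabla V_{\mathrm{ext}}(q)\in\mathbb{R}^{3N}$. The system is the input-free port-Hamiltonian model of $N$ point masses connected by $n_{\mathrm{el}}$ hyperelastic springs with strains $C$ as independent state. *)

theory Defs
  imports "HOL-Analysis.Analysis"
begin

definition grad :: "('a::euclidean_space \<Rightarrow> real) \<Rightarrow> 'a \<Rightarrow> 'a" where
  "grad f x = (THE g. (f has_derivative (\<lambda>h. g \<bullet> h)) (at x))"

text \<open>Configurations q = (q_1,...,q_N) in (R^3)^N, indexed by a finite type 'n;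
  springs indexed by a finite type 'e.\<close>
definition qbar :: "('e \<Rightarrow> 'n::finite \<Rightarrow> real) \<Rightarrow> (real^3)^'n \<Rightarrow> 'e \<Rightarrow> real^3" where
  "qbar a q i = (\<Sum>j\<in>UNIV. a i j *\<^sub>R (q $ j))"

definition Ctilde :: "('e::finite \<Rightarrow> 'n::finite \<Rightarrow> real) \<Rightarrow> ('e \<Rightarrow> real) \<Rightarrow> (real^3)^'n \<Rightarrow> real^'e" where
  "Ctilde a l0 q = (\<chi> i. (qbar a q i \<bullet> qbar a q i) / (l0 i)\<^sup>2)"

definition Vint :: "('e::finite \<Rightarrow> real) \<Rightarrow> ('e \<Rightarrow> real) \<Rightarrow> real^'e \<Rightarrow> real" where
  "Vint k l0 C = (\<Sum>i\<in>UNIV. k i * l0 i / 4 * (C $ i - ln (C $ i) - 1))"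

definition Mmul :: "('n::finite \<Rightarrow> real) \<Rightarrow> (real^3)^'n \<Rightarrow> (real^3)^'n" where
  "Mmul m w = (\<chi> k. m k *\<^sub>R (w $ k))"

definition angmom :: "('n::finite \<Rightarrow> real) \<Rightarrow> (real^3)^'n \<Rightarrow> (real^3)^'n \<Rightarrow> real^3" where
  "angmom m q v = (\<Sum>k\<in>UNIV. cross3 (q $ k) (m k *\<^sub>R (v $ k)))"

end

theory Submission imports Defs begin

text \<open>
  Differentiating \<open>L = \<Sum>\<^sub>k q\<^sub>k \<times> m\<^sub>k v\<^sub>k\<close> gives \<open>\<Sum>\<^sub>k q\<^sub>k \<times> m\<^sub>k v'\<^sub>k\<close>, since \<open>v\<^sub>k \<times> v\<^sub>k = 0\<close>.
  The spring forces have the form \<open>D\<^sup>T y\<close> with \<open>D\<close> the Jacobian of the strain map, and their total torque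
  about an axis \<open>e\<close> is \<open>\<langle>D R, y\<rangle>\<close>, where \<open>R = (e \<times> q\<^sub>k)\<^sub>k\<close> is the infinitesimal rotation of \<open>q\<close>.
  Each strain depends on \<open>q\<close> only through the length of \<open>\<Sum>\<^sub>j a\<^sub>i\<^sub>j q\<^sub>j\<close>, which rotations
  preserve, so \<open>D R = 0\<close>. Only the external torque remains; for a uniform external force \<open>b\<close> it
  is \<open>(\<Sum>\<^sub>k q\<^sub>k) \<times> b\<close>, which is orthogonal to \<open>b\<close>.
\<close>

lemma has_derivative_vec_lambda:
  fixes f :: "'a::real_normed_vector \<Rightarrow> 'e::finite \<Rightarrow> real"
  assumes "\<And>i. ((\<lambda>x. f x i) has_derivative (\<lambda>h. f' h i)) F"
  shows "((\<lambda>x. \<chi> i. f x i) has_derivative (\<lambda>h. \<chi> i. f' h i)) F"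
proof -
  have basis: "(\<chi> i. g i) = (\<Sum>i\<in>UNIV. g i *\<^sub>R axis i (1::real))" for g :: "'e \<Rightarrow> real"
    by (simp add: vec_eq_iff sum_component axis_def if_distrib eq_commute[of _ "(_::'e)"] cong: if_cong)
  show ?thesis
    unfolding basis by (intro has_derivative_sum has_derivative_scaleR_left assms)
qed

lemma bounded_linear_qbar: "bounded_linear (\<lambda>q. qbar a q i)"
  unfolding qbar_def
  by (intro bounded_linear_sum bounded_linear_compose[OF bounded_linear_scaleR_right bounded_linear_vec_nth])

lemma cross3_sum_right: "cross3 e (\<Sum>j\<in>A. f j) = (\<Sum>j\<in>A. cross3 e (f j))"
  using bilinear_cross by (simp add: bilinear_def linear_sum)

lemma qbar_cross3: "qbar a (\<chi> k. cross3 e (q $ k)) i = cross3 e (qbar a q i)"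
  by (simp add: qbar_def cross3_sum_right cross_mult_right)

definition Ctilde_deriv :: "('e::finite \<Rightarrow> 'n::finite \<Rightarrow> real) \<Rightarrow> ('e \<Rightarrow> real) \<Rightarrow>
    (real^3)^'n \<Rightarrow> (real^3)^'n \<Rightarrow> real^'e" where
  "Ctilde_deriv a l0 q h = (\<chi> i. 2 * (qbar a q i \<bullet> qbar a h i) / (l0 i)\<^sup>2)"

lemma has_derivative_Ctilde: "(Ctilde a l0 has_derivative Ctilde_deriv a l0 q) (at q)"
proof -
  have "((\<lambda>x. (qbar a x i \<bullet> qbar a x i) / (l0 i)\<^sup>2) has_derivative
      (\<lambda>h. 2 * (qbar a q i \<bullet> qbar a h i) / (l0 i)\<^sup>2)) (at q)" for i
  proof -
    have "((\<lambda>x. qbar a x i) has_derivative (\<lambda>h. qbar a h i)) (at q)"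
      by (rule bounded_linear_imp_has_derivative[OF bounded_linear_qbar])
    from bounded_linear.has_derivative[OF bounded_linear_divide has_derivative_inner[OF this this]]
    show ?thesis
      by (simp add: inner_commute)
  qed
  then show ?thesis
    unfolding Ctilde_def Ctilde_deriv_def by (rule has_derivative_vec_lambda)
qed

lemma Ctilde_deriv_rotation: "Ctilde_deriv a l0 q (\<chi> k. cross3 e (q $ k)) = 0"
  by (simp add: Ctilde_deriv_def qbar_cross3 dot_cross_self vec_eq_iff)

lemma inner_cross3_cyclic: "cross3 x w \<bullet> e = cross3 e x \<bullet> (w::real^3)"
  by (simp add: cross3_simps)

lemma sum_cross3_inner: "(\<Sum>k\<in>UNIV. cross3 (q $ k) (w $ k)) \<bullet> e = (\<chi> k. cross3 e (q $ k)) \<bullet> w"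
  by (simp add: inner_sum_left inner_cross3_cyclic inner_vec_def[of "\<chi> k. cross3 e (q $ k)" w])

lemma sum_cross3_adjoint_eq_0:
  fixes q :: "(real^3)^'n::finite" and D :: "(real^3)^'n \<Rightarrow> 'b::euclidean_space"
  assumes "linear D" and "\<And>e. D (\<chi> k. cross3 e (q $ k)) = 0"
  shows "(\<Sum>k\<in>UNIV. cross3 (q $ k) (adjoint D y $ k)) = 0"
proof -
  have "(\<Sum>k\<in>UNIV. cross3 (q $ k) (adjoint D y $ k)) \<bullet> e = 0" for e
    by (simp add: sum_cross3_inner adjoint_works[OF assms(1)] assms(2))
  from this[of "\<Sum>k\<in>UNIV. cross3 (q $ k) (adjoint D y $ k)"] show ?thesis
    by simp
qed

lemma sum_cross3_spring_force_eq_0: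
  "(\<Sum>k\<in>UNIV. cross3 (q $ k) (adjoint (frechet_derivative (Ctilde a l0) (at q)) y $ k)) = 0"
proof -
  have "frechet_derivative (Ctilde a l0) (at q) = Ctilde_deriv a l0 q"
    using frechet_derivative_at[OF has_derivative_Ctilde] by (rule sym)
  moreover have "linear (Ctilde_deriv a l0 q)"
    using has_derivative_Ctilde by (rule has_derivative_linear)
  ultimately show ?thesis
    using sum_cross3_adjoint_eq_0[where D = "Ctilde_deriv a l0 q", OF _ Ctilde_deriv_rotation]
    by simp
qed

lemma has_vector_derivative_angmom:
  assumes "(q has_vector_derivative v t) (at t within S)"
    and "(v has_vector_derivative v') (at t within S)"
  shows "((\<lambda>s. angmom m (q s) (v s)) has_vector_derivative
      (\<Sum>k\<in>UNIV. cross3 (q t $ k) (m k *\<^sub>R (v' $ k)))) (at t within S)"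
proof -
  have bb: "bounded_bilinear cross3"
    using bilinear_cross bilinear_conv_bounded_bilinear by blast
  have "((\<lambda>s. cross3 (q s $ k) (m k *\<^sub>R (v s $ k))) has_vector_derivative
      cross3 (q t $ k) (m k *\<^sub>R (v' $ k))) (at t within S)" for k
  proof -
    have "((\<lambda>s. q s $ k) has_vector_derivative v t $ k) (at t within S)"
      and "((\<lambda>s. m k *\<^sub>R (v s $ k)) has_vector_derivative m k *\<^sub>R (v' $ k)) (at t within S)"
      using bounded_linear.has_vector_derivative[OF bounded_linear_vec_nth assms(1)]
        bounded_linear.has_vector_derivative[OF bounded_linear_compose[OF bounded_linear_scaleR_right
          bounded_linear_vec_nth] assms(2)]
      by simp_all
    from bounded_bilinear.has_vector_derivative[OF bb this]
    show ?thesis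
      by (simp add: cross_mult_right)
  qed
  then show ?thesis
    unfolding angmom_def by (rule has_vector_derivative_sum)
qed

theorem mainTheorem2:
  fixes m :: "'n::finite \<Rightarrow> real"
    and Vext :: "(real^3)^'n \<Rightarrow> real"
    and k l0 :: "'e::finite \<Rightarrow> real"
    and a :: "'e \<Rightarrow> 'n \<Rightarrow> real"
    and q v vd :: "real \<Rightarrow> (real^3)^'n"
    and C :: "real \<Rightarrow> real^'e"
    and t0 tend :: real
  assumes m_pos: "\<forall>j. m j > 0"
    and k_pos: "\<forall>i. k i > 0"
    and l0_pos: "\<forall>i. l0 i > 0"
    and Vext_diff: "\<forall>x. Vext differentiable (at x)"
    and Vext_C1: "continuous_on UNIV (grad Vext)"
    and t_lt: "t0 < tend"
    and C_pos: "\<forall>t\<in>{t0..tend}. \<forall>i. C t $ i > 0"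
    and q_ode: "\<forall>t\<in>{t0..tend}. (q has_vector_derivative v t) (at t within {t0..tend})"
    and v_ode: "\<forall>t\<in>{t0..tend}. (v has_vector_derivative vd t) (at t within {t0..tend})"
    and vd_cont: "continuous_on {t0..tend} vd"
    and M_eq: "\<forall>t\<in>{t0..tend}. Mmul m (vd t) =
        - grad Vext (q t)
        - adjoint (frechet_derivative (Ctilde a l0) (at (q t))) (grad (Vint k l0) (C t))"
    and C_ode: "\<forall>t\<in>{t0..tend}. (C has_vector_derivative
        frechet_derivative (Ctilde a l0) (at (q t)) (v t)) (at t within {t0..tend})"
  shows "(\<forall>t\<in>{t0..tend}. ((\<lambda>s. angmom m (q s) (v s)) has_vector_derivative
            - (\<Sum>j\<in>UNIV. cross3 (q t $ j) (grad Vext (q t) $ j))) (at t within {t0..tend}))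
       \<and> (\<forall>b::real^3. (\<forall>x j. - (grad Vext x $ j) = b) \<longrightarrow>
            (\<forall>t\<in>{t0..tend}. ((\<lambda>s. angmom m (q s) (v s) \<bullet> b) has_real_derivative 0)
                (at t within {t0..tend})))"
proof -
  let ?I = "{t0..tend}"
  let ?torque = "\<lambda>x. \<Sum>j\<in>UNIV. cross3 (x $ j) (grad Vext x $ j)"
  have L': "((\<lambda>s. angmom m (q s) (v s)) has_vector_derivative - ?torque (q t)) (at t within ?I)"
    if t: "t \<in> ?I" for t
  proof -
    have "m j *\<^sub>R (vd t $ j) = - (grad Vext (q t) $ j)
        - adjoint (frechet_derivative (Ctilde a l0) (at (q t))) (grad (Vint k l0) (C t)) $ j" for j
      using M_eq t by (simp add: Mmul_def vec_eq_iff)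
    then have "(\<Sum>j\<in>UNIV. cross3 (q t $ j) (m j *\<^sub>R (vd t $ j))) = - ?torque (q t)"
      by (simp add: Cross3.right_diff_distrib sum_subtractf sum_negf sum_cross3_spring_force_eq_0)
    with has_vector_derivative_angmom[where m = m, OF q_ode[rule_format, OF t] v_ode[rule_format, OF t]]
    show ?thesis by simp
  qed
  have "((\<lambda>s. angmom m (q s) (v s) \<bullet> b) has_real_derivative 0) (at t within ?I)"
    if b: "\<forall>x j. - (grad Vext x $ j) = b" and t: "t \<in> ?I" for b t
  proof -
    have "grad Vext x $ j = - b" for x j
      using b by (metis minus_minus)
    then have "?torque (q t) \<bullet> b = 0"
      by (simp add: inner_sum_left dot_cross_self)
    with bounded_linear.has_vector_derivative[OF bounded_linear_inner_left[of b] L'[OF t]]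
    show ?thesis
      by (simp add: has_real_derivative_iff_has_vector_derivative)
  qed
  with L' show ?thesis by blast
qed

end
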